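(* Let $\mathbf{X}$ be a Banach space and $\mathcal{S}\subset\mathbf{X}$. If $\mathbb{P}$ is a Borel probability measure on $\mathcal{S}$ of growth order $s_0\in[0,\infty)$, then for every $s>s_0$ and every codec $\mathcal{C}=((E_R,D_R))_{R\in\mathbb{N}}$ we have $\mathbb{P}^\ast(\mathcal{A}^s_{\mathcal{S},\mathbf{X}}(\mathcal{C}))=0$.
   Context: Let $(\mathbf{X},\|\cdot\|_{\mathbf{X}})$ be a real Banach space and $\mathcal{S}\subset\mathbf{X}$. A codec is a sequence $\mathcal{C}=((E_R,D_R))_{R\in\mathbb{N}}$ of maps $E_R:\mathcal{S}\to\{0,1\}^R$, $D_R:\{0,1\}^R\to\mathbf{X}$. For $s\ge0$, $\mathcal{A}^s_{\mathcal{S},\mathbf{X}}(\mathcal{C})=\{\mathbf{x}\in\mathcal{S}:\sup_{R\in\mathbb{N}}R^s\|\mathbf{x}-D_R(E_R(\mathbf{x}))\|_{\mathbf{X}}<\infty\}$. $\mathcal{S}$ carries the trace of the Borel $\sigma$-algebra of $\mathbf{X}$; $\mathbb{P}^\ast$ is the induced outer measure $\mathbb{P}^\ast(M)=\inf\{\sum_n\mathbb{P}(M_n):M_n\text{ measurable},M\subset\bigcup_nM_n\}$. $\mathbb{P}$ has (logarithmic) growth order $s_0$ w.r.t. $\mathbf{X}$ if for every $s>s_0$ there exist $\varepsilon_0,c>0$ with $\mathbb{P}(\mathcal{S}\cap\mathcal{B}(\mathbf{x},\varepsilon;\mathbf{X}))\le2^{-c\varepsilon^{-1/s}}$ for all $\mathbf{x}\in\mathbf{X}$,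 $\varepsilon\in(0,\varepsilon_0)$, where $\mathcal{B}(\mathbf{x},\varepsilon;\mathbf{X})$ is the closed ball. *)

theory Defs
  imports "HOL-Probability.Probability"
begin

text \<open>A codec: encoders E R : S -> {0,1}^R (bit strings as bool lists of length R)
  and decoders D R : {0,1}^R -> X.\<close>
definition is_codec :: "'a set \<Rightarrow> (nat \<Rightarrow> 'a \<Rightarrow> bool list) \<Rightarrow> (nat \<Rightarrow> bool list \<Rightarrow> 'a) \<Rightarrow> bool" where
  "is_codec S E D \<longleftrightarrow> (\<forall>R. \<forall>x\<in>S. length (E R x) = R)"

definition approx_class :: "real \<Rightarrow> 'a::real_normed_vector set \<Rightarrow> (nat \<Rightarrow> 'a \<Rightarrow> bool list) \<Rightarrow> (nat \<Rightarrow> bool list \<Rightarrow> 'a) \<Rightarrow> 'a set" where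
  "approx_class s S E D =
     {x\<in>S. \<exists>C. \<forall>R\<ge>1. real R powr s * norm (x - D R (E R x)) \<le> C}"

definition outer_meas :: "'a measure \<Rightarrow> 'a set \<Rightarrow> ennreal" where
  "outer_meas P M = (INF Ms \<in> {Ms :: nat \<Rightarrow> 'a set. range Ms \<subseteq> sets P \<and> M \<subseteq> (\<Union>n. Ms n)}.
                        (\<Sum>n. emeasure P (Ms n)))"

definition has_growth_order :: "'a::real_normed_vector measure \<Rightarrow> 'a set \<Rightarrow> real \<Rightarrow> bool" where
  "has_growth_order P S s0 \<longleftrightarrow>
     (\<forall>s>s0. \<exists>\<epsilon>0>0. \<exists>c>0. \<forall>x. \<forall>\<epsilon>. 0 < \<epsilon> \<and> \<epsilon> < \<epsilon>0 \<longrightarrow>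
        measure P (S \<inter> cball x \<epsilon>) \<le> 2 powr (- c * \<epsilon> powr (-1 / s)))"

end

theory Submission
  imports Defs
begin

text \<open>If \<open>x\<close> is approximated at rate \<open>R powr -s\<close> by the codec, then for some \<open>n\<close> and every
  \<open>R\<close> it lies within \<open>(n + 1) R powr -s\<close> of one of the \<open>2 ^ R\<close> codewords \<open>D R b\<close>. Fix \<open>s0 < t < s\<close>.
  By the growth order, each such ball has measure at most \<open>2 powr (- c ((n + 1) R powr -s) powr (-1/t))\<close>,
  i.e. \<open>2 powr (- c' R powr (s/t))\<close>, and since \<open>s/t > 1\<close> this beats the factor \<open>2 ^ R\<close> from the number of
  codewords. So for each \<open>n\<close> the set of such \<open>x\<close> is null, and the approximation class lies in a
  countable union of null sets.\<close>

lemma finite_bool_lists_length: "finite {bs :: bool list. length bs = R}"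
  using finite_lists_length_eq[of "UNIV :: bool set" R] by simp

lemma card_bool_lists_length: "card {bs :: bool list. length bs = R} = 2 ^ R"
  using card_lists_length_eq[of "UNIV :: bool set" R] by simp

lemma outer_meas_eq_0_if_subset_null_set:
  assumes "M \<subseteq> N" and "N \<in> null_sets P"
  shows "outer_meas P M = 0"
proof -
  have "outer_meas P M \<le> (\<Sum>n. emeasure P N)"
    unfolding outer_meas_def using assms by (intro INF_lower) auto
  then show ?thesis
    using null_setsD1[OF assms(2)] by simp
qed

definition codebook_cover :: "(nat \<Rightarrow> bool list \<Rightarrow> 'a::metric_space) \<Rightarrow> nat \<Rightarrow> real \<Rightarrow> 'a set" where
  "codebook_cover D R r = (\<Union>bs\<in>{bs. length bs = R}. cball (D R bs) r)"

lemma approx_class_subset_codebook_covers: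
  assumes "is_codec S E D"
  shows "approx_class s S E D \<subseteq>
    (\<Union>n. S \<inter> (\<Inter>R\<in>{1..}. codebook_cover D R (real (Suc n) * real R powr - s)))"
proof
  fix x
  assume "x \<in> approx_class s S E D"
  then obtain C where "x \<in> S" and C: "\<And>R. R \<ge> 1 \<Longrightarrow> real R powr s * norm (x - D R (E R x)) \<le> C"
    unfolding approx_class_def by auto
  define n where "n = nat \<lceil>C\<rceil>"
  have "x \<in> codebook_cover D R (real (Suc n) * real R powr - s)" if "R \<ge> 1" for R
  proof -
    have "length (E R x) = R"
      using assms \<open>x \<in> S\<close> by (simp add: is_codec_def)
    moreover have "real R powr s * dist (D R (E R x)) x \<le> real (Suc n)"
      using C[OF that] by (simp add: dist_norm norm_minus_commute n_def) linarith
    then have "dist (D R (E R x)) x \<le> real (Suc n) * real R powr - s"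
      using that by (simp add: powr_minus field_simps)
    ultimately show ?thesis
      unfolding codebook_cover_def by auto
  qed
  with \<open>x \<in> S\<close> show "x \<in> (\<Union>n. S \<inter> (\<Inter>R\<in>{1..}. codebook_cover D R (real (Suc n) * real R powr - s)))"
    by blast
qed

lemma measure_inter_codebook_cover_le:
  assumes "finite_measure P"
    and "\<And>x. S \<inter> cball x r \<in> sets P"
    and "\<And>x. measure P (S \<inter> cball x r) \<le> b"
  shows "measure P (S \<inter> codebook_cover D R r) \<le> 2 ^ R * b"
proof -
  interpret finite_measure P by fact
  have "measure P (S \<inter> codebook_cover D R r)
      \<le> (\<Sum>bs\<in>{bs. length bs = R}. measure P (S \<inter> cball (D R bs) r))"
    unfolding codebook_cover_def Int_UN_distrib
    by (intro measure_UNION_le finite_bool_lists_length assms(2))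
  also have "\<dots> \<le> (\<Sum>bs\<in>{bs :: bool list. length bs = R}. b)"
    by (intro sum_mono assms(3))
  also have "\<dots> = 2 ^ R * b"
    by (simp add: card_bool_lists_length)
  finally show ?thesis .
qed

lemma codebook_count_times_ball_bound_tendsto_0:
  assumes "0 < c" and "0 < C" and "0 < t" and "t < s"
  shows "(\<lambda>R. 2 ^ R * 2 powr (- c * (C * real R powr - s) powr (-1/t))) \<longlonglongrightarrow> 0"
proof -
  define k where "k = c * C powr (-1/t)"
  define q where "q = s / t"
  have "0 < k" "1 < q"
    using assms by (simp_all add: k_def q_def)
  have R_powr_q: "filterlim (\<lambda>R. real R powr q) at_top sequentially"
  proof (rule filterlim_at_top_mono[OF filterlim_real_sequentially])
    show "\<forall>\<^sub>F R in sequentially. real R \<le> real R powr q"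
      using eventually_ge_at_top[of 1]
      by eventually_elim (use powr_mono[of 1 q] \<open>1 < q\<close> in auto)
  qed
  have "(\<lambda>R. real R powr (1 - q)) \<longlonglongrightarrow> 0"
    using \<open>1 < q\<close> by (intro tendsto_neg_powr filterlim_real_sequentially) auto
  then have "(\<lambda>R. (real R powr (1 - q) - k) * ln 2) \<longlonglongrightarrow> (0 - k) * ln 2"
    by (intro tendsto_mult_right tendsto_diff tendsto_const)
  then have "filterlim (\<lambda>R. (real R powr (1 - q) - k) * ln 2 * real R powr q) at_bot sequentially"
    using \<open>0 < k\<close> by (intro filterlim_tendsto_neg_mult_at_bot R_powr_q) auto
  then have "(\<lambda>R. exp ((real R powr (1 - q) - k) * ln 2 * real R powr q)) \<longlonglongrightarrow> 0"
    by (rule filterlim_compose[OF exp_at_bot])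
  moreover have "\<forall>\<^sub>F R in sequentially. exp ((real R powr (1 - q) - k) * ln 2 * real R powr q)
      = 2 ^ R * 2 powr (- c * (C * real R powr - s) powr (-1/t))"
    using eventually_ge_at_top[of 1]
  proof eventually_elim
    case (elim R)
    have exponent: "(real R powr (1 - q) - k) * ln 2 * real R powr q = (real R - k * real R powr q) * ln 2"
      using elim by (simp add: algebra_simps powr_add[symmetric])
    have radius_powr: "(C * real R powr - s) powr (-1/t) = C powr (-1/t) * real R powr q"
      using assms elim by (simp add: powr_mult powr_powr q_def)
    have "exp ((real R powr (1 - q) - k) * ln 2 * real R powr q) = 2 powr (real R - k * real R powr q)"
      using exponent by (simp add: powr_def)
    also have "\<dots> = 2 ^ R * 2 powr (- c * (C * real R powr - s) powr (-1/t))"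
      using radius_powr by (simp add: k_def powr_diff powr_realpow powr_minus divide_inverse mult.assoc)
    finally show ?case .
  qed
  ultimately show ?thesis
    by (rule Lim_transform_eventually)
qed

lemma codebook_covers_null_set:
  assumes "finite_measure P"
    and cball_sets: "\<And>x r. S \<inter> cball x r \<in> sets P"
    and growth: "\<And>x \<epsilon>. 0 < \<epsilon> \<Longrightarrow> \<epsilon> < \<epsilon>0 \<Longrightarrow> measure P (S \<inter> cball x \<epsilon>) \<le> 2 powr (- c * \<epsilon> powr (-1/t))"
    and "0 < \<epsilon>0" and "0 < c" and "0 < C" and "0 < t" and "t < s"
  shows "S \<inter> (\<Inter>R\<in>{1..}. codebook_cover D R (C * real R powr - s)) \<in> null_sets P"
    (is "?A \<in> _")
proof -
  interpret finite_measure P by fact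
  have cover_sets: "S \<inter> codebook_cover D R r \<in> sets P" for R r
    unfolding codebook_cover_def Int_UN_distrib
    by (intro sets.finite_UN finite_bool_lists_length cball_sets)
  have "?A = (\<Inter>R\<in>{1..}. S \<inter> codebook_cover D R (C * real R powr - s))"
    by auto
  also have "\<dots> \<in> sets P"
    using cover_sets by (intro sets.countable_INT) auto
  finally have "?A \<in> sets P" .
  have "(\<lambda>R. C * real R powr - s) \<longlonglongrightarrow> 0"
    using \<open>t < s\<close> \<open>0 < t\<close> by (intro tendsto_mult_right_zero tendsto_neg_powr filterlim_real_sequentially) auto
  then have "\<forall>\<^sub>F R in sequentially. C * real R powr - s < \<epsilon>0"
    using \<open>0 < \<epsilon>0\<close> by (auto dest: order_tendstoD(2))
  then have "\<forall>\<^sub>F R in sequentially. measure P ?A \<le> 2 ^ R * 2 powr (- c * (C * real R powr - s) powr (-1/t))"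
    using eventually_ge_at_top[of 1]
  proof eventually_elim
    case (elim R)
    have "measure P ?A \<le> measure P (S \<inter> codebook_cover D R (C * real R powr - s))"
      using elim by (intro finite_measure_mono cover_sets) auto
    also have "\<dots> \<le> 2 ^ R * 2 powr (- c * (C * real R powr - s) powr (-1/t))"
      using elim \<open>0 < C\<close> by (intro measure_inter_codebook_cover_le assms(1) cball_sets growth) auto
    finally show ?case .
  qed
  then have "measure P ?A \<le> 0"
    using codebook_count_times_ball_bound_tendsto_0[OF \<open>0 < c\<close> \<open>0 < C\<close> \<open>0 < t\<close> \<open>t < s\<close>]
    by (intro tendsto_le[OF _ _ tendsto_const]) auto
  with \<open>?A \<in> sets P\<close> show ?thesis
    by (simp add: null_sets_def emeasure_eq_measure measure_nonneg antisym)
qed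

theorem proposition2p4:
  fixes S :: "'a::banach set" and P :: "'a measure" and s0 s :: real
    and E :: "nat \<Rightarrow> 'a \<Rightarrow> bool list" and D :: "nat \<Rightarrow> bool list \<Rightarrow> 'a"
  assumes "prob_space P"
    and "space P = S"
    and "sets P = sets (restrict_space borel S)"
    and "0 \<le> s0"
    and "has_growth_order P S s0"
    and "s > s0"
    and "is_codec S E D"
  shows "outer_meas P (approx_class s S E D) = 0"
proof -
  interpret prob_space P by fact
  define t where "t = (s0 + s) / 2"
  have "s0 < t" "0 < t" "t < s"
    using assms(4,6) by (auto simp: t_def)
  obtain \<epsilon>0 c where "0 < \<epsilon>0" "0 < c" and growth:
    "\<And>x \<epsilon>. 0 < \<epsilon> \<Longrightarrow> \<epsilon> < \<epsilon>0 \<Longrightarrow> measure P (S \<inter> cball x \<epsilon>) \<le> 2 powr (- c * \<epsilon> powr (-1/t))"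
    using assms(5) \<open>s0 < t\<close> unfolding has_growth_order_def by blast
  have cball_sets: "S \<inter> cball x r \<in> sets P" for x r
    unfolding assms(3) sets_restrict_space by auto
  have "S \<inter> (\<Inter>R\<in>{1..}. codebook_cover D R (real (Suc n) * real R powr - s)) \<in> null_sets P" for n
    using \<open>0 < \<epsilon>0\<close> \<open>0 < c\<close> \<open>0 < t\<close> \<open>t < s\<close>
    by (intro codebook_covers_null_set[OF _ cball_sets growth] finite_measure_axioms) auto
  then have "(\<Union>n. S \<inter> (\<Inter>R\<in>{1..}. codebook_cover D R (real (Suc n) * real R powr - s))) \<in> null_sets P"
    by blast
  with approx_class_subset_codebook_covers[OF assms(7)] show ?thesis
    by (rule outer_meas_eq_0_if_subset_null_set)
qed

end
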